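(* Let $(X,d)$ be a complete metric space, $N\in\mathbb{N}\setminus\{0\}$, $\mathcal{R}$ an $N$--transitive binary relation on $X$, and $T:X\rightarrow X$ an $\mathcal{R}$--contractive mapping of Meir--Keeler type. Assume: (D1) $T$ is $\mathcal{R}$--preserving; (D2) there exists $x_{0}\in X$ with $x_{0}\mathcal{R}Tx_{0}$. If either (D3) $T$ is continuous, or (D4) $(X,d)$ is $(T,\mathcal{R})$--regular, then $T$ has a fixed point $x^{\ast}\in X$. If additionally (D5) $X$ is $\mathcal{R}$--connected, then $x^{\ast}$ is the unique fixed point of $T$ and $T^{n}x\rightarrow x^{\ast}$ as $n\rightarrow\infty$ for every $x\in X$.
   Context: $\mathbb{N}$ is the set of non-negative integers; $T^n$ is the $n$-th iterate. $T$ is $\mathcal{R}$--contractive of Meir--Keeler type if for every $\varepsilon>0$ there exists $\delta(\varepsilon)>0$ such that for all $x,y\in X$ with $x\mathcal{R}y$ and $\varepsilon\leq d(x,y)<\varepsilon+\delta(\varepsilon)$ one has $d(Tx,Ty)<\varepsilon$. $T$ is $\mathcal{R}$--preserving if $x\mathcal{R}y$ implies $Tx\mathcal{R}Ty$. $\mathcal{R}$ is $N$--transitive if for all $x_0,\dots,x_{N+1}\in X$ with $x_i\mathcal{R}x_{i+1}$ for all $i\in\{0,\dots,N\}$ one has $x_0\mathcal{R}x_{N+1}$. A sequence $\{x_n\}$ is $(T,\mathcal{R})$--orbital if $x_n=T^nx_0$ and $x_n\mathcal{R}x_{n+1}$ for all $n$. $(X,d)$ is $(T,\mathcal{R})$--regular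 if for every $(T,\mathcal{R})$--orbital sequence $\{x_n\}$ with $x_n\rightarrow x\in X$ there is a subsequence $\{x_{n(k)}\}$ with $x_{n(k)}\mathcal{R}x$ for all $k$. An $\mathcal{R}$--chain from $x$ to $y$ is $(z_0,\dots,z_n)$ with $z_0=x$, $z_n=y$ and $z_{i-1}\mathcal{R}z_i$ or $z_i\mathcal{R}z_{i-1}$ for each $i\in\{1,\dots,n\}$; $X$ is $\mathcal{R}$--connected if for all $x\neq y$ there is an $\mathcal{R}$--chain from $x$ to $y$. *)

theory Defs
  imports "HOL-Analysis.Analysis"
begin

definition N_transitive :: "nat \<Rightarrow> ('a \<Rightarrow> 'a \<Rightarrow> bool) \<Rightarrow> bool" where
  "N_transitive N R \<longleftrightarrow>
     (\<forall>x :: nat \<Rightarrow> 'a. (\<forall>i\<le>N. R (x i) (x (Suc i))) \<longrightarrow> R (x 0) (x (Suc N)))"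

definition R_contractive_MK :: "('a::metric_space \<Rightarrow> 'a \<Rightarrow> bool) \<Rightarrow> ('a \<Rightarrow> 'a) \<Rightarrow> bool" where
  "R_contractive_MK R T \<longleftrightarrow>
     (\<forall>\<epsilon>>0. \<exists>\<delta>>0. \<forall>x y. R x y \<and> \<epsilon> \<le> dist x y \<and> dist x y < \<epsilon> + \<delta>
         \<longrightarrow> dist (T x) (T y) < \<epsilon>)"

definition R_preserving :: "('a \<Rightarrow> 'a \<Rightarrow> bool) \<Rightarrow> ('a \<Rightarrow> 'a) \<Rightarrow> bool" where
  "R_preserving R T \<longleftrightarrow> (\<forall>x y. R x y \<longrightarrow> R (T x) (T y))"

definition orbital :: "('a \<Rightarrow> 'a \<Rightarrow> bool) \<Rightarrow> ('a \<Rightarrow> 'a) \<Rightarrow> (nat \<Rightarrow> 'a) \<Rightarrow> bool" where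
  "orbital R T x \<longleftrightarrow> (\<forall>n. x n = (T ^^ n) (x 0) \<and> R (x n) (x (Suc n)))"

definition TR_regular :: "('a::metric_space \<Rightarrow> 'a \<Rightarrow> bool) \<Rightarrow> ('a \<Rightarrow> 'a) \<Rightarrow> bool" where
  "TR_regular R T \<longleftrightarrow>
     (\<forall>x l. orbital R T x \<and> (x \<longlonglongrightarrow> l) \<longrightarrow>
        (\<exists>r :: nat \<Rightarrow> nat. strict_mono r \<and> (\<forall>k. R (x (r k)) l)))"

definition R_chain :: "('a \<Rightarrow> 'a \<Rightarrow> bool) \<Rightarrow> 'a \<Rightarrow> 'a \<Rightarrow> bool" where
  "R_chain R x y \<longleftrightarrow>
     (\<exists>(z :: nat \<Rightarrow> 'a) n. z 0 = x \<and> z n = y \<and>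
        (\<forall>i\<in>{1..n}. R (z (i - 1)) (z i) \<or> R (z i) (z (i - 1))))"

definition R_connected :: "('a \<Rightarrow> 'a \<Rightarrow> bool) \<Rightarrow> bool" where
  "R_connected R \<longleftrightarrow> (\<forall>x y. x \<noteq> y \<longrightarrow> R_chain R x y)"

end

theory Submission
  imports Defs
begin

text \<open>
  Meir--Keeler contractivity makes \<open>T\<close> nonexpansive on related pairs, so along related
  pairs the distances \<open>d(T\<^sup>n u, T\<^sup>n v)\<close> decrease; their limit must be \<open>0\<close>, since a positive
  limit \<open>\<epsilon>\<close> would eventually lie in \<open>[\<epsilon>, \<epsilon> + \<delta>)\<close> and be pushed below \<open>\<epsilon>\<close>.
  For the Picard orbit of \<open>x\<^sub>0\<close>, \<open>N\<close>-transitivity relates \<open>x\<^sub>m\<close> to every \<open>x\<^bsub>m+1+kN\<^esub>\<close>, and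
  an induction on \<open>k\<close> keeps \<open>d(x\<^bsub>m+1\<^esub>, x\<^bsub>m+2+kN\<^esub>) < \<epsilon>\<close> once consecutive steps are small,
  which gives the Cauchy property. Continuity or regularity makes the limit a fixed point,
  and along an \<open>\<R>\<close>-chain from any \<open>x\<close> to it, each link shrinks to \<open>0\<close> under iteration.
\<close>

lemma R_contractive_MK_dist_le:
  assumes "R_contractive_MK R T" "R u v"
  shows "dist (T u) (T v) \<le> dist u v"
proof (cases "u = v")
  case False
  then have "dist u v > 0" by simp
  then obtain \<delta> where "\<delta> > 0" "\<forall>x y. R x y \<and> dist u v \<le> dist x y \<and> dist x y < dist u v + \<delta>
      \<longrightarrow> dist (T x) (T y) < dist u v"
    using assms(1) unfolding R_contractive_MK_def by blast
  then show ?thesis using assms(2) by force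
qed simp

lemma R_preserving_funpow:
  assumes "R_preserving R T" "R u v"
  shows "R ((T ^^ n) u) ((T ^^ n) v)"
  using assms by (induction n) (auto simp: R_preserving_def)

lemma R_contractive_MK_funpow_dist_tendsto_0:
  assumes mk: "R_contractive_MK R T" and pres: "R_preserving R T" and uv: "R u v"
  shows "(\<lambda>n. dist ((T ^^ n) u) ((T ^^ n) v)) \<longlonglongrightarrow> 0"
proof -
  define a where "a n = dist ((T ^^ n) u) ((T ^^ n) v)" for n
  have dec: "decseq a"
    unfolding decseq_Suc_iff a_def
    using R_contractive_MK_dist_le[OF mk R_preserving_funpow[OF pres uv]] by simp
  have bdd: "bdd_below (range a)" unfolding a_def by (intro bdd_belowI[of _ 0]) auto
  define L where "L = (INF n. a n)"
  have lim: "a \<longlonglongrightarrow> L" unfolding L_def by (rule LIMSEQ_decseq_INF[OF bdd dec])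
  have L_le: "L \<le> a n" for n unfolding L_def by (rule cINF_lower[OF bdd]) simp
  have "L \<ge> 0" unfolding L_def a_def by (rule cINF_greatest) auto
  have "L = 0"
  proof (rule ccontr)
    assume "L \<noteq> 0"
    with \<open>L \<ge> 0\<close> have "L > 0" by simp
    then obtain \<delta> where "\<delta> > 0" and \<delta>: "\<forall>x y. R x y \<and> L \<le> dist x y \<and> dist x y < L + \<delta>
        \<longrightarrow> dist (T x) (T y) < L"
      using mk unfolding R_contractive_MK_def by blast
    have "eventually (\<lambda>n. a n < L + \<delta>) sequentially"
      using lim \<open>\<delta> > 0\<close> by (intro order_tendstoD(2)) auto
    then obtain n where "a n < L + \<delta>" by (auto simp: eventually_sequentially)
    then have "dist (T ((T ^^ n) u)) (T ((T ^^ n) v)) < L"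
      using \<delta> R_preserving_funpow[OF pres uv, of n] L_le[of n] unfolding a_def by blast
    then have "a (Suc n) < L" unfolding a_def by simp
    with L_le[of "Suc n"] show False by simp
  qed
  with lim show ?thesis unfolding a_def by simp
qed

lemma funpow_fixed_point:
  assumes "T p = p"
  shows "(T ^^ n) p = p"
  using assms by (induction n) auto

lemma N_transitive_jump:
  assumes "N_transitive N R" and step: "\<And>n. R (x n) (x (Suc n))"
  shows "R (x m) (x (m + 1 + k * N))"
proof (induction k)
  case 0
  show ?case using step[of m] by simp
next
  case (Suc k)
  define z where "z i = (if i = 0 then x m else x (m + k * N + i))" for i
  have "R (z i) (z (Suc i))" for i
    using Suc step[of "m + k * N + i"] by (simp add: z_def)
  then have "R (z 0) (z (Suc N))" using assms(1) unfolding N_transitive_def by blast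
  then show ?case by (simp add: z_def algebra_simps)
qed

lemma dist_le_mult_if_steps_less:
  assumes "\<And>n. n \<ge> M \<Longrightarrow> dist (x n) (x (Suc n)) < \<eta>" and "m \<ge> M"
  shows "dist (x m) (x (m + j)) \<le> real j * \<eta>"
proof (induction j)
  case (Suc j)
  have "dist (x m) (x (m + Suc j)) \<le> dist (x m) (x (m + j)) + dist (x (m + j)) (x (Suc (m + j)))"
    using dist_triangle by simp
  also have "\<dots> \<le> real j * \<eta> + \<eta>"
    using Suc assms by (intro add_mono) (auto intro: less_imp_le)
  finally show ?case by (simp add: algebra_simps)
qed simp

text \<open>
  By induction on \<open>k\<close>, \<open>d(x\<^sub>m, x\<^bsub>m+1+kN\<^esub>) < \<epsilon> + \<delta>\<close> (one small step, the previous
  bound and \<open>N - 1\<close> small steps); as \<open>x\<^sub>m \<R> x\<^bsub>m+1+kN\<^esub>\<close>, one application of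
  \<open>T\<close> brings this distance below \<open>\<epsilon>\<close>: by the Meir--Keeler condition if it is at least \<open>\<epsilon>\<close>, by
  nonexpansiveness otherwise.
\<close>
lemma R_contractive_MK_orbit_jump_dist_lt:
  assumes "N > 0" and Ntr: "N_transitive N R" and mk: "R_contractive_MK R T"
    and orbit: "\<And>n. x (Suc n) = T (x n)" and step: "\<And>n. R (x n) (x (Suc n))"
    and \<delta>: "\<forall>u v. R u v \<and> \<epsilon> \<le> dist u v \<and> dist u v < \<epsilon> + \<delta> \<longrightarrow> dist (T u) (T v) < \<epsilon>"
    and small: "\<And>n. n \<ge> n0 \<Longrightarrow> dist (x n) (x (Suc n)) < \<eta>"
    and "\<epsilon> > 0" and "\<eta> > 0" and N\<eta>: "real N * \<eta> < \<delta>" and "m \<ge> n0"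
  shows "dist (x (m + 1)) (x (m + 2 + k * N)) < \<epsilon>"
  using \<open>m \<ge> n0\<close>
proof (induction k arbitrary: m)
  have apply_T: "dist (x (m + 1)) (x (m + 2 + k * N)) < \<epsilon>"
    if "dist (x m) (x (m + 1 + k * N)) < \<epsilon> + \<delta>" for m k
  proof -
    have rel: "R (x m) (x (m + 1 + k * N))" by (rule N_transitive_jump[where x=x, OF Ntr step])
    have "x (m + 1) = T (x m)" "x (m + 2 + k * N) = T (x (m + 1 + k * N))"
      using orbit by (simp_all add: numeral_2_eq_2)
    then show ?thesis
      using \<delta> rel that R_contractive_MK_dist_le[OF mk rel]
      by (cases "\<epsilon> \<le> dist (x m) (x (m + 1 + k * N))") auto
  qed
  {
    case 0
    have "\<eta> \<le> real N * \<eta>" using \<open>N > 0\<close> \<open>\<eta> > 0\<close> by simp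
    moreover have "dist (x m) (x (m + 1)) < \<eta>" using small 0 by simp
    ultimately show ?case using apply_T[of m 0] N\<eta> \<open>\<epsilon> > 0\<close> by simp
  next
    case (Suc k)
    have idx: "m + 1 + Suc k * N = (m + 2 + k * N) + (N - 1)" using \<open>N > 0\<close> by simp
    have "dist (x m) (x (m + 1 + Suc k * N))
        \<le> dist (x m) (x (m + 1)) + dist (x (m + 1)) (x (m + 2 + k * N))
          + dist (x (m + 2 + k * N)) (x ((m + 2 + k * N) + (N - 1)))"
      unfolding idx
      using dist_triangle[of "x m" _ "x (m + 1)"] dist_triangle[of "x (m + 1)" _ "x (m + 2 + k * N)"]
      by (smt (verit))
    also have "\<dots> < \<eta> + \<epsilon> + real (N - 1) * \<eta>"
    proof -
      have "n0 \<le> m + 2 + k * N" using Suc.prems by simp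
      with small have "dist (x (m + 2 + k * N)) (x ((m + 2 + k * N) + (N - 1))) \<le> real (N - 1) * \<eta>"
        by (rule dist_le_mult_if_steps_less)
      then show ?thesis using small[of m] Suc.IH[OF Suc.prems] Suc.prems by simp
    qed
    also have "\<dots> = \<epsilon> + real N * \<eta>" using \<open>N > 0\<close> by (simp add: of_nat_diff algebra_simps)
    finally show ?case using apply_T[of m "Suc k"] N\<eta> by simp
  }
qed

lemma R_contractive_MK_orbit_Cauchy:
  assumes "N > 0" and Ntr: "N_transitive N R" and mk: "R_contractive_MK R T"
    and orbit: "\<And>n. x (Suc n) = T (x n)" and step: "\<And>n. R (x n) (x (Suc n))"
    and steps_0: "(\<lambda>n. dist (x n) (x (Suc n))) \<longlonglongrightarrow> 0"
  shows "Cauchy x"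
proof (rule CauchyI')
  fix e :: real assume "e > 0"
  define \<epsilon> where "\<epsilon> = e / 2"
  have "\<epsilon> > 0" using \<open>e > 0\<close> by (simp add: \<epsilon>_def)
  then obtain \<delta> where "\<delta> > 0" and
    \<delta>: "\<forall>u v. R u v \<and> \<epsilon> \<le> dist u v \<and> dist u v < \<epsilon> + \<delta> \<longrightarrow> dist (T u) (T v) < \<epsilon>"
    using mk unfolding R_contractive_MK_def by blast
  define \<eta> where "\<eta> = min \<delta> \<epsilon> / (real N + 1)"
  have "\<eta> > 0" using \<open>\<delta> > 0\<close> \<open>\<epsilon> > 0\<close> by (simp add: \<eta>_def)
  have N\<eta>: "real N * \<eta> < min \<delta> \<epsilon>"
  proof -
    have "real N * \<eta> = min \<delta> \<epsilon> * (real N / (real N + 1))" by (simp add: \<eta>_def)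
    also have "\<dots> < min \<delta> \<epsilon> * 1" using \<open>\<delta> > 0\<close> \<open>\<epsilon> > 0\<close> by (intro mult_strict_left_mono) auto
    finally show ?thesis by simp
  qed
  then have N\<eta>_\<delta>: "real N * \<eta> < \<delta>" and N\<eta>_\<epsilon>: "real N * \<eta> < \<epsilon>" by simp_all
  obtain n0 where small: "\<And>n. n \<ge> n0 \<Longrightarrow> dist (x n) (x (Suc n)) < \<eta>"
    using order_tendstoD(2)[OF steps_0 \<open>\<eta> > 0\<close>] by (auto simp: eventually_sequentially)
  show "\<exists>M. \<forall>m\<ge>M. \<forall>n>m. dist (x m) (x n) < e"
  proof (intro exI[of _ "Suc n0"] allI impI)
    fix m n assume "Suc n0 \<le> m" and "m < n"
    then obtain m' where m': "m = m' + 1" "m' \<ge> n0" by (metis Suc_eq_plus1 Suc_le_D Suc_le_mono)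
    define k where "k = (n - m - 1) div N"
    define r where "r = (n - m - 1) mod N"
    have "k * N + r = n - m - 1" unfolding k_def r_def by (rule div_mult_mod_eq)
    then have n: "n = (m' + 2 + k * N) + r" using \<open>m < n\<close> m'(1) by arith
    have "r < N" using \<open>N > 0\<close> unfolding r_def by simp
    have jump: "dist (x (m' + 1)) (x (m' + 2 + k * N)) < \<epsilon>"
      by (rule R_contractive_MK_orbit_jump_dist_lt[where x=x and R=R and T=T and \<delta>=\<delta>,
          OF \<open>N > 0\<close> Ntr mk orbit step \<delta> small \<open>\<epsilon> > 0\<close> \<open>\<eta> > 0\<close> N\<eta>_\<delta> m'(2)])
    have "n0 \<le> m' + 2 + k * N" using m'(2) by simp
    with small have rest: "dist (x (m' + 2 + k * N)) (x n) \<le> real r * \<eta>"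
      unfolding n by (rule dist_le_mult_if_steps_less)
    have "dist (x m) (x n) \<le> dist (x (m' + 1)) (x (m' + 2 + k * N)) + dist (x (m' + 2 + k * N)) (x n)"
      using dist_triangle m'(1) by simp
    also have "\<dots> < \<epsilon> + real r * \<eta>" using jump rest by simp
    also have "\<dots> \<le> \<epsilon> + real N * \<eta>" using \<open>r < N\<close> \<open>\<eta> > 0\<close> by simp
    finally show "dist (x m) (x n) < e" using N\<eta>_\<epsilon> unfolding \<epsilon>_def by linarith
  qed
qed

lemma TR_regular_orbit_limit_fixed:
  assumes mk: "R_contractive_MK R T" and reg: "TR_regular R T"
    and orb: "orbital R T x" and lim: "x \<longlonglongrightarrow> l"
  shows "T l = l"
proof -
  obtain r :: "nat \<Rightarrow> nat" where r: "strict_mono r" "\<And>k. R (x (r k)) l"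
    using reg orb lim unfolding TR_regular_def by blast
  have orbit: "x (Suc n) = T (x n)" for n
    using orb unfolding orbital_def by (metis funpow.simps(2) o_apply)
  have sub: "(\<lambda>k. x (r k)) \<longlonglongrightarrow> l"
    using LIMSEQ_subseq_LIMSEQ[OF lim r(1)] by (simp add: comp_def)
  have "(\<lambda>k. dist (x (Suc (r k))) (T l)) \<longlonglongrightarrow> 0"
  proof (rule Lim_null_comparison)
    show "\<forall>\<^sub>F k in sequentially. norm (dist (x (Suc (r k))) (T l)) \<le> dist (x (r k)) l"
      using R_contractive_MK_dist_le[OF mk r(2)] by (simp add: orbit)
    show "(\<lambda>k. dist (x (r k)) l) \<longlonglongrightarrow> 0" using sub by (rule tendsto_dist_iff[THEN iffD1])
  qed
  then have "(\<lambda>k. x (Suc (r k))) \<longlonglongrightarrow> T l" by (rule tendsto_dist_iff[THEN iffD2])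
  moreover have "(\<lambda>k. x (Suc (r k))) \<longlonglongrightarrow> l"
    using LIMSEQ_subseq_LIMSEQ[OF LIMSEQ_Suc[OF lim] r(1)] by (simp add: comp_def)
  ultimately show ?thesis by (rule LIMSEQ_unique)
qed

lemma continuous_orbit_limit_fixed:
  fixes T :: "'a::metric_space \<Rightarrow> 'a"
  assumes "continuous_on UNIV T" and orbit: "\<And>n. x (Suc n) = T (x n)" and lim: "x \<longlonglongrightarrow> l"
  shows "T l = l"
proof -
  have "(\<lambda>n. T (x n)) \<longlonglongrightarrow> T l"
    by (rule continuous_on_tendsto_compose[OF assms(1) lim]) auto
  then have "(\<lambda>n. x (Suc n)) \<longlonglongrightarrow> T l" by (simp add: orbit)
  then show ?thesis using LIMSEQ_Suc[OF lim] by (rule LIMSEQ_unique)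
qed

lemma R_chain_funpow_dist_tendsto_0:
  assumes mk: "R_contractive_MK R T" and pres: "R_preserving R T" and "R_chain R y w"
  shows "(\<lambda>k. dist ((T ^^ k) y) ((T ^^ k) w)) \<longlonglongrightarrow> 0"
proof -
  obtain z :: "nat \<Rightarrow> 'a" and n where z: "z 0 = y" "z n = w"
    and link: "\<forall>i\<in>{1..n}. R (z (i - 1)) (z i) \<or> R (z i) (z (i - 1))"
    using assms(3) unfolding R_chain_def by blast
  define D where "D k i = dist ((T ^^ k) (z i)) ((T ^^ k) (z (Suc i)))" for k i
  have "(\<lambda>k. D k i) \<longlonglongrightarrow> 0" if "i < n" for i
  proof -
    have "R (z i) (z (Suc i)) \<or> R (z (Suc i)) (z i)" using link[rule_format, of "Suc i"] that by simp
    then show ?thesis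
    proof
      assume "R (z (Suc i)) (z i)"
      from R_contractive_MK_funpow_dist_tendsto_0[OF mk pres this] show ?thesis
        by (simp add: D_def dist_commute)
    qed (simp add: D_def R_contractive_MK_funpow_dist_tendsto_0[OF mk pres])
  qed
  then have sum_0: "(\<lambda>k. \<Sum>i<n. D k i) \<longlonglongrightarrow> 0" by (intro tendsto_null_sum) auto
  have chain_le: "dist ((T ^^ k) (z 0)) ((T ^^ k) (z j)) \<le> (\<Sum>i<j. D k i)" for k j
  proof (induction j)
    case (Suc j)
    then show ?case
      using dist_triangle[of "(T ^^ k) (z 0)" "(T ^^ k) (z (Suc j))" "(T ^^ k) (z j)"] by (simp add: D_def)
  qed simp
  have "norm (dist ((T ^^ k) y) ((T ^^ k) w)) \<le> (\<Sum>i<n. D k i)" for k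
    using chain_le[of k n] by (simp add: z)
  then show ?thesis by (rule Lim_null_comparison[OF always_eventually[OF allI] sum_0])
qed

lemma R_connected_funpow_tendsto_fixed:
  assumes mk: "R_contractive_MK R T" and pres: "R_preserving R T"
    and "R_connected R" and "T p = p"
  shows "(\<lambda>n. (T ^^ n) y) \<longlonglongrightarrow> p"
proof -
  note fix_pow = funpow_fixed_point[of T p, OF \<open>T p = p\<close>]
  show ?thesis
  proof (cases "y = p")
    case False
    with \<open>R_connected R\<close> have "R_chain R y p" unfolding R_connected_def by blast
    from R_chain_funpow_dist_tendsto_0[OF mk pres this]
    have "(\<lambda>n. dist ((T ^^ n) y) p) \<longlonglongrightarrow> 0" by (simp add: fix_pow)
    then show ?thesis by (rule tendsto_dist_iff[THEN iffD2])
  qed (simp add: fix_pow)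
qed

theorem corollary5:
  fixes T :: "'a::complete_space \<Rightarrow> 'a" and R :: "'a \<Rightarrow> 'a \<Rightarrow> bool" and N :: nat
  assumes "N > 0"
    and "N_transitive N R"
    and "R_contractive_MK R T"
    and D1: "R_preserving R T"
    and D2: "\<exists>x0. R x0 (T x0)"
    and D34: "continuous_on UNIV T \<or> TR_regular R T"
  shows "\<exists>xs. T xs = xs \<and>
           (R_connected R \<longrightarrow>
              (\<forall>y. T y = y \<longrightarrow> y = xs) \<and> (\<forall>x. ((\<lambda>n. (T ^^ n) x) \<longlonglongrightarrow> xs)))"
proof -
  obtain x0 where x0: "R x0 (T x0)" using D2 by blast
  define x where "x n = (T ^^ n) x0" for n
  have orbit: "x (Suc n) = T (x n)" for n by (simp add: x_def)
  have step: "R (x n) (x (Suc n))" for n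
    using R_preserving_funpow[OF D1 x0, of n] by (simp add: x_def funpow_swap1)
  have "(\<lambda>n. dist (x n) (x (Suc n))) \<longlonglongrightarrow> 0"
    using R_contractive_MK_funpow_dist_tendsto_0[OF assms(3) D1 x0] by (simp add: x_def funpow_swap1)
  then have "Cauchy x" by (rule R_contractive_MK_orbit_Cauchy[where x=x, OF assms(1-3) orbit step])
  then obtain xs where lim: "x \<longlonglongrightarrow> xs" using Cauchy_convergent convergent_def by blast
  have "orbital R T x" unfolding orbital_def using step by (simp add: x_def)
  then have fixed: "T xs = xs"
    using D34 continuous_orbit_limit_fixed[OF _ orbit lim]
      TR_regular_orbit_limit_fixed[OF assms(3) _ _ lim] by blast
  have "(\<forall>y. T y = y \<longrightarrow> y = xs) \<and> (\<forall>y. (\<lambda>n. (T ^^ n) y) \<longlonglongrightarrow> xs)" if "R_connected R"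
  proof (intro conjI allI impI)
    fix y
    show conv: "(\<lambda>n. (T ^^ n) y) \<longlonglongrightarrow> xs"
      by (rule R_connected_funpow_tendsto_fixed[OF assms(3) D1 that fixed])
    assume "T y = y"
    with conv have "(\<lambda>n. y) \<longlonglongrightarrow> xs" by (simp add: funpow_fixed_point)
    then show "y = xs" by (simp add: LIMSEQ_const_iff)
  qed
  with fixed show ?thesis by blast
qed

end
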